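(* For every $\ell \in \mathbb{N}$ and every $k$-tree $G$ there exists a $k$-tree $\bar{G}$ such that every $\ell$-local book embedding of $\bar{G}$ contains a forest embedding of $G$.
   Context: All graphs are finite and simple; $k \ge 1$ is an integer. A graph is a $k$-tree if it is isomorphic to $K_{k+1}$, or it is obtained from a smaller $k$-tree $G'$ by adding one new vertex whose neighborhood in $G'$ is a clique of order $k$. A linear embedding of $G=(V,E)$ is a pair $(\prec,\mathcal{P})$ where $\prec$ is a total ordering of $V$ and $\mathcal{P}$ is a partition of $E$ into parts called pages. Two edges $uv, xy$ with $u\prec v$, $x \prec y$ cross if $u \prec x \prec v \prec y$ or $x \prec u \prec y \prec v$. A book embedding is a linear embedding in which no two crossing edges lie on the same page. For a book embedding and a vertex $v$, $\mathcal{P}_v$ is the set of pages containing an edge incident to $v$; the embedding is $\ell$-local if $|\mathcal{P}_v| \le \ell$ for all $v$. A linear embedding is a forest embedding if the edges on each page form a forest. A book embedding $(\prec,\mathcal{P})$ of a graph $\bar G = (\bar V, \bar E)$ contains a forest embedding of $G$ if there is a set $X \subseteq \bar V$ with $G \cong \bar G[X]$ such that the restriction of $(\prec,\mathcal{P})$ to $\bar G[X]$ (the ordering $\prec$ restricted to $X$ and the partition of $E(\bar G[X])$ induced by the pages) is a forest embedding of $\bar G[X]$. *)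

theory Defs
  imports Main
begin

(* A finite simple graph is given by a vertex set V and an edge set E of
   2-element subsets of V. *)

inductive ktree :: "nat \<Rightarrow> 'a set \<Rightarrow> 'a set set \<Rightarrow> bool" for k :: nat where
  base: "\<lbrakk> finite V; card V = k + 1 \<rbrakk> \<Longrightarrow>
           ktree k V {e. \<exists>u v. e = {u, v} \<and> u \<noteq> v \<and> u \<in> V \<and> v \<in> V}"
| step: "\<lbrakk> ktree k V E; w \<notin> V; C \<subseteq> V; card C = k;
           \<forall>u\<in>C. \<forall>v\<in>C. u \<noteq> v \<longrightarrow> {u, v} \<in> E \<rbrakk> \<Longrightarrow>
           ktree k (insert w V) (E \<union> {{w, c} | c. c \<in> C})"

definition crossing :: "'a rel \<Rightarrow> 'a set \<Rightarrow> 'a set \<Rightarrow> bool" where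
  "crossing R e f \<longleftrightarrow> (\<exists>u v x y. e = {u, v} \<and> f = {x, y} \<and> (u, v) \<in> R \<and> (x, y) \<in> R \<and>
      (((u, x) \<in> R \<and> (x, v) \<in> R \<and> (v, y) \<in> R) \<or>
       ((x, u) \<in> R \<and> (u, y) \<in> R \<and> (y, v) \<in> R)))"

(* A linear embedding: a strict total order R on V together with a page
   assignment p of the edges (the pages are the classes of the partition
   of E induced by p). *)
definition linear_embedding :: "'a set \<Rightarrow> 'a set set \<Rightarrow> 'a rel \<Rightarrow> ('a set \<Rightarrow> nat) \<Rightarrow> bool" where
  "linear_embedding V E R p \<longleftrightarrow> strict_linear_order_on V R \<and> R \<subseteq> V \<times> V"

definition book_embedding :: "'a set \<Rightarrow> 'a set set \<Rightarrow> 'a rel \<Rightarrow> ('a set \<Rightarrow> nat) \<Rightarrow> bool" where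
  "book_embedding V E R p \<longleftrightarrow> linear_embedding V E R p \<and>
     (\<forall>e\<in>E. \<forall>f\<in>E. p e = p f \<longrightarrow> \<not> crossing R e f)"

definition pages_at :: "'a set set \<Rightarrow> ('a set \<Rightarrow> nat) \<Rightarrow> 'a \<Rightarrow> nat set" where
  "pages_at E p v = p ` {e\<in>E. v \<in> e}"

definition local_embedding :: "nat \<Rightarrow> 'a set \<Rightarrow> 'a set set \<Rightarrow> ('a set \<Rightarrow> nat) \<Rightarrow> bool" where
  "local_embedding l V E p \<longleftrightarrow> (\<forall>v\<in>V. card (pages_at E p v) \<le> l)"

definition is_cycle :: "'a set set \<Rightarrow> 'a list \<Rightarrow> bool" where
  "is_cycle F vs \<longleftrightarrow> length vs \<ge> 3 \<and> distinct vs \<and>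
     (\<forall>i < length vs. {vs ! i, vs ! ((i + 1) mod length vs)} \<in> F)"

definition forest :: "'a set set \<Rightarrow> bool" where
  "forest F \<longleftrightarrow> \<not> (\<exists>vs. is_cycle F vs)"

definition forest_embedding :: "'a set \<Rightarrow> 'a set set \<Rightarrow> 'a rel \<Rightarrow> ('a set \<Rightarrow> nat) \<Rightarrow> bool" where
  "forest_embedding V E R p \<longleftrightarrow> linear_embedding V E R p \<and>
     (\<forall>c. forest {e\<in>E. p e = c})"

definition induced_edges :: "'a set set \<Rightarrow> 'a set \<Rightarrow> 'a set set" where
  "induced_edges E X = {e\<in>E. e \<subseteq> X}"

definition graph_iso :: "'a set \<Rightarrow> 'a set set \<Rightarrow> 'b set \<Rightarrow> 'b set set \<Rightarrow> bool" where
  "graph_iso V E W F \<longleftrightarrow> (\<exists>f. bij_betw f V W \<and>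
     (\<forall>u\<in>V. \<forall>v\<in>V. {u, v} \<in> E \<longleftrightarrow> {f u, f v} \<in> F))"

definition contains_forest_embedding ::
  "'b set \<Rightarrow> 'b set set \<Rightarrow> 'b rel \<Rightarrow> ('b set \<Rightarrow> nat) \<Rightarrow> 'a set \<Rightarrow> 'a set set \<Rightarrow> bool" where
  "contains_forest_embedding W F R p V E \<longleftrightarrow>
     (\<exists>X \<subseteq> W. graph_iso V E X (induced_edges F X) \<and>
        forest_embedding X (induced_edges F X) (R \<inter> (X \<times> X)) p)"

end

theory Submission
  imports Defs
begin

(* The host k-tree is built in levels: level 0 is a (k+1)-clique, and level m+1 arises from
   level m by attaching N = 2 k^3 l + 1 new vertices to every k-clique of level m, each adjacent
   exactly to that clique; we stop after |V(G)| levels.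

   In a book embedding, two vertices have at most two common neighbours joined to both of them
   on one page, since a one-page K_{2,3} forces two crossing edges. The pages at a k-clique C
   number at most k l, so some child of C sees C on pairwise distinct pages ("rainbow").
   Adding a rainbow child to a vertex set on which every page is a forest keeps every page a
   forest, because a cycle through the child would use two of its edges on one page.
   Following the construction sequence of G, such children can be chosen level by level,
   which yields an induced copy of G on which every page is a forest. *)

section \<open>k-trees and induced copies\<close>

lemma ktree_finite: "ktree k V E \<Longrightarrow> finite V"
  by (induction rule: ktree.induct) auto

lemma ktree_edge: "ktree k V E \<Longrightarrow> e \<in> E \<Longrightarrow> \<exists>u v. e = {u, v} \<and> u \<noteq> v \<and> u \<in> V \<and> v \<in> V"
  by (induction rule: ktree.induct) blast+

lemma ktree_edge_subset: "ktree k V E \<Longrightarrow> e \<in> E \<Longrightarrow> e \<subseteq> V"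
  using ktree_edge by blast

lemma ktree_no_loop: "ktree k V E \<Longrightarrow> {x} \<notin> E"
  using ktree_edge[of k V E "{x}"] by auto

lemma ktree_finite_edges: "ktree k V E \<Longrightarrow> finite E"
  using ktree_finite[of k V E] ktree_edge_subset[of k V E] finite_subset[of E "Pow V"] by blast

definition clique :: "'a set set \<Rightarrow> 'a set \<Rightarrow> bool" where
  "clique F C \<longleftrightarrow> (\<forall>u\<in>C. \<forall>v\<in>C. u \<noteq> v \<longrightarrow> {u, v} \<in> F)"

lemma clique_subset: "clique F C \<Longrightarrow> D \<subseteq> C \<Longrightarrow> clique F D"
  unfolding clique_def by blast

lemma clique_insert: "clique F C \<Longrightarrow> \<forall>c\<in>C. {w, c} \<in> F \<Longrightarrow> clique F (insert w C)"
  unfolding clique_def using insert_commute[of _ w "{}"] by auto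

definition induced_iso :: "('a \<Rightarrow> 'b) \<Rightarrow> 'a set \<Rightarrow> 'a set set \<Rightarrow> 'b set \<Rightarrow> 'b set set \<Rightarrow> bool" where
  "induced_iso f V E X F \<longleftrightarrow> bij_betw f V X \<and> (\<forall>u\<in>V. \<forall>v\<in>V. {u, v} \<in> E \<longleftrightarrow> {f u, f v} \<in> F)"

lemma complete_edges_memI:
  "u \<noteq> v \<Longrightarrow> u \<in> V \<Longrightarrow> v \<in> V \<Longrightarrow> {u, v} \<in> {e. \<exists>u v. e = {u, v} \<and> u \<noteq> v \<and> u \<in> V \<and> v \<in> V}"
  by (rule CollectI, rule exI[of _ u], rule exI[of _ v]) simp

lemma induced_iso_complete:
  assumes "finite V" "finite X" "card X = card V" "clique F X" "\<And>x. {x} \<notin> F"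
  shows "\<exists>f. induced_iso f V {e. \<exists>u v. e = {u, v} \<and> u \<noteq> v \<and> u \<in> V \<and> v \<in> V} X F"
proof -
  obtain f where f: "bij_betw f V X"
    using finite_same_card_bij assms(1-3) by metis
  have "{u, v} \<in> {e. \<exists>u v. e = {u, v} \<and> u \<noteq> v \<and> u \<in> V \<and> v \<in> V} \<longleftrightarrow> {f u, f v} \<in> F"
    if "u \<in> V" "v \<in> V" for u v
  proof (cases "u = v")
    case True
    then show ?thesis
      using assms(5) by (auto simp: doubleton_eq_iff)
  next
    case False
    then have "f u \<noteq> f v"
      using f that by (metis bij_betw_inv_into_left)
    moreover have "f u \<in> X" "f v \<in> X"
      using f that by (auto dest: bij_betwE)
    ultimately have "{f u, f v} \<in> F"
      using assms(4) unfolding clique_def by blast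
    moreover have "{u, v} \<in> {e. \<exists>u v. e = {u, v} \<and> u \<noteq> v \<and> u \<in> V \<and> v \<in> V}"
      using False that by blast
    ultimately show ?thesis
      by blast
  qed
  with f show ?thesis
    unfolding induced_iso_def by blast
qed

lemma induced_iso_insert:
  assumes iso: "induced_iso f V E X F" and E: "\<forall>e\<in>E. e \<subseteq> V"
    and "w \<notin> V" "w' \<notin> X" "C \<subseteq> V" "{w'} \<notin> F"
    and nbrs: "\<forall>x\<in>X. {w', x} \<in> F \<longleftrightarrow> x \<in> f ` C"
  shows "induced_iso (f(w := w')) (insert w V) (E \<union> {{w, c} | c. c \<in> C}) (insert w' X) F"
proof -
  have bij: "bij_betw f V X" and adj: "\<forall>u\<in>V. \<forall>v\<in>V. {u, v} \<in> E \<longleftrightarrow> {f u, f v} \<in> F"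
    using iso unfolding induced_iso_def by auto
  have "bij_betw (f(w := w')) V X"
    by (rule bij_betw_cong[THEN iffD2, OF _ bij]) (use \<open>w \<notin> V\<close> in auto)
  then have "bij_betw (f(w := w')) (V \<union> {w}) (X \<union> {w'})"
    using \<open>w' \<notin> X\<close> by (intro bij_betw_combine) auto
  then have bij': "bij_betw (f(w := w')) (insert w V) (insert w' X)"
    by simp
  have new_edge: "{w, v} \<in> E \<union> {{w, c} | c. c \<in> C} \<longleftrightarrow> {w', f v} \<in> F" if "v \<in> V" for v
  proof -
    have "{w, v} \<in> E \<union> {{w, c} | c. c \<in> C} \<longleftrightarrow> v \<in> C"
      using E \<open>w \<notin> V\<close> that by (auto simp: doubleton_eq_iff)
    also have "\<dots> \<longleftrightarrow> f v \<in> f ` C"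
      using bij \<open>C \<subseteq> V\<close> that by (auto simp: bij_betw_def inj_on_def)
    also have "\<dots> \<longleftrightarrow> {w', f v} \<in> F"
      using nbrs bij that by (auto simp: bij_betw_def)
    finally show ?thesis .
  qed
  have "{u, v} \<in> E \<union> {{w, c} | c. c \<in> C} \<longleftrightarrow> {(f(w := w')) u, (f(w := w')) v} \<in> F"
    if u: "u \<in> insert w V" and v: "v \<in> insert w V" for u v
  proof -
    consider "u = w" "v = w" | "u = w" "v \<in> V" | "u \<in> V" "v = w" | "u \<in> V" "v \<in> V"
      using u v by blast
    then show ?thesis
    proof cases
      case 1
      have "{w} \<notin> E \<union> {{w, c} | c. c \<in> C}"
        using E \<open>w \<notin> V\<close> \<open>C \<subseteq> V\<close> by (auto simp: doubleton_eq_iff)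
      with 1 \<open>{w'} \<notin> F\<close> show ?thesis
        by simp
    next
      case 2
      with new_edge[of v] \<open>w \<notin> V\<close> show ?thesis
        by auto
    next
      case 3
      with new_edge[of u] \<open>w \<notin> V\<close> show ?thesis
        by (auto simp: insert_commute)
    next
      case 4
      then have "{u, v} \<notin> {{w, c} | c. c \<in> C}"
        using \<open>w \<notin> V\<close> by auto
      with 4 adj \<open>w \<notin> V\<close> show ?thesis
        by auto
    qed
  qed
  with bij' show ?thesis
    unfolding induced_iso_def by blast
qed

lemma induced_iso_clique:
  assumes "induced_iso f V E X F" "C \<subseteq> V" "clique E C"
  shows "clique F (f ` C)"
  unfolding clique_def
proof (intro ballI impI)
  fix a b
  assume "a \<in> f ` C" "b \<in> f ` C" "a \<noteq> b"
  then obtain u v where "u \<in> C" "v \<in> C" "a = f u" "b = f v" "u \<noteq> v"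
    by blast
  have "{u, v} \<in> E" "u \<in> V" "v \<in> V"
    using assms(2,3) \<open>u \<in> C\<close> \<open>v \<in> C\<close> \<open>u \<noteq> v\<close> unfolding clique_def by auto
  then have "{f u, f v} \<in> F"
    using assms(1) unfolding induced_iso_def by blast
  with \<open>a = f u\<close> \<open>b = f v\<close> show "{a, b} \<in> F"
    by simp
qed

lemma induced_iso_graph_iso: "induced_iso f V E X F \<Longrightarrow> graph_iso V E X (induced_edges F X)"
  unfolding induced_iso_def graph_iso_def induced_edges_def
  by (intro exI[of _ f]) (auto dest: bij_betwE)

section \<open>Cycles and page-wise forests\<close>

lemma cycle_index_predecessor:
  fixes n i :: nat
  assumes "3 \<le> n" "i < n"
  shows "\<exists>h<n. (h + 1) mod n = i \<and> h \<noteq> i \<and> h \<noteq> (i + 1) mod n \<and> (i + 1) mod n \<noteq> i"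
proof (cases i)
  case 0
  with assms show ?thesis by (intro exI[of _ "n - 1"]) auto
next
  case (Suc h)
  with assms show ?thesis by (intro exI[of _ h]) (auto simp: mod_Suc)
qed

lemma is_cycle_mono:
  assumes "is_cycle F vs" "{e \<in> F. e \<subseteq> set vs} \<subseteq> F'"
  shows "is_cycle F' vs"
proof -
  have "{vs ! i, vs ! ((i + 1) mod length vs)} \<subseteq> set vs" if "i < length vs" for i
  proof -
    have "(i + 1) mod length vs < length vs"
      using that by (intro mod_less_divisor) linarith
    with that show ?thesis
      by (simp add: nth_mem)
  qed
  with assms show ?thesis
    unfolding is_cycle_def by blast
qed

lemma is_cycle_two_neighbours:
  assumes "is_cycle F vs" "v \<in> set vs"
  shows "\<exists>x y. x \<noteq> y \<and> x \<noteq> v \<and> y \<noteq> v \<and> {v, x} \<in> F \<and> {v, y} \<in> F"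
proof -
  let ?n = "length vs"
  have n: "3 \<le> ?n" and "distinct vs"
    and edge: "\<And>i. i < ?n \<Longrightarrow> {vs ! i, vs ! ((i + 1) mod ?n)} \<in> F"
    using assms(1) unfolding is_cycle_def by auto
  obtain i where i: "i < ?n" "vs ! i = v"
    using assms(2) by (metis in_set_conv_nth)
  obtain h where h: "h < ?n" "(h + 1) mod ?n = i" "h \<noteq> i" "h \<noteq> (i + 1) mod ?n" "(i + 1) mod ?n \<noteq> i"
    using cycle_index_predecessor[OF n i(1)] by blast
  have "(i + 1) mod ?n < ?n"
    using i(1) by (intro mod_less_divisor) linarith
  with h i(1) \<open>distinct vs\<close>
  have "vs ! ((i + 1) mod ?n) \<noteq> vs ! h" "vs ! ((i + 1) mod ?n) \<noteq> vs ! i" "vs ! h \<noteq> vs ! i"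
    by (simp_all add: nth_eq_iff_index_eq)
  moreover have "{v, vs ! ((i + 1) mod ?n)} \<in> F" "{v, vs ! h} \<in> F"
    using edge[OF i(1)] edge[OF h(1)] i(2) h(2) by (simp_all add: insert_commute)
  ultimately show ?thesis
    using i(2) by blast
qed

definition pagewise_forest :: "'a set set \<Rightarrow> ('a set \<Rightarrow> nat) \<Rightarrow> 'a set \<Rightarrow> bool" where
  "pagewise_forest F p X \<longleftrightarrow> (\<forall>q. forest {e \<in> induced_edges F X. p e = q})"

lemma pagewise_forest_empty: "pagewise_forest F p {}"
  unfolding pagewise_forest_def forest_def
proof (intro allI notI, elim exE)
  fix q vs
  assume "is_cycle {e \<in> induced_edges F {}. p e = q} vs"
  then have "{vs ! 0, vs ! (1 mod length vs)} \<in> induced_edges F {}"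
    unfolding is_cycle_def by fastforce
  then show False
    by (simp add: induced_edges_def)
qed

lemma pagewise_forest_insert:
  assumes forest: "pagewise_forest F p X" and "w \<notin> X"
    and rainbow: "inj_on (\<lambda>x. p {w, x}) {x \<in> X. {w, x} \<in> F}"
  shows "pagewise_forest F p (insert w X)"
  unfolding pagewise_forest_def forest_def
proof (intro allI notI, elim exE)
  fix q vs
  assume cycle: "is_cycle {e \<in> induced_edges F (insert w X). p e = q} vs"
  show False
  proof (cases "w \<in> set vs")
    case True
    then obtain x y where "x \<noteq> y" "x \<noteq> w" "y \<noteq> w"
      and "{w, x} \<in> {e \<in> induced_edges F (insert w X). p e = q}"
        "{w, y} \<in> {e \<in> induced_edges F (insert w X). p e = q}"
      using is_cycle_two_neighbours[OF cycle] by blast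
    then have "x \<in> X" "y \<in> X" "{w, x} \<in> F" "{w, y} \<in> F" "p {w, x} = p {w, y}"
      by (auto simp: induced_edges_def)
    with rainbow \<open>x \<noteq> y\<close> show False
      by (auto dest: inj_onD)
  next
    case False
    then have "is_cycle {e \<in> induced_edges F X. p e = q} vs"
      by (intro is_cycle_mono[OF cycle]) (auto simp: induced_edges_def)
    with forest show False
      unfolding pagewise_forest_def forest_def by blast
  qed
qed

lemma pagewise_forest_insert_child:
  assumes "pagewise_forest F p X" "X \<subseteq> W" "w \<notin> W"
    and "\<forall>x\<in>W. {w, x} \<in> F \<longleftrightarrow> x \<in> C" "inj_on (\<lambda>c. p {w, c}) C"
  shows "pagewise_forest F p (insert w X)"
proof (rule pagewise_forest_insert[OF assms(1)])
  show "w \<notin> X"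
    using assms(2,3) by blast
  show "inj_on (\<lambda>x. p {w, x}) {x \<in> X. {w, x} \<in> F}"
    by (rule inj_on_subset[OF assms(5)]) (use assms(2,4) in blast)
qed

lemma contains_forest_embeddingI:
  assumes "book_embedding W F R p" "X \<subseteq> W" "induced_iso f V E X F" "pagewise_forest F p X"
  shows "contains_forest_embedding W F R p V E"
proof -
  have "trans R" "irrefl R" "total_on W R"
    using assms(1) unfolding book_embedding_def linear_embedding_def strict_linear_order_on_def by auto
  have "trans (X \<times> X)"
    unfolding trans_def by blast
  with \<open>trans R\<close> have "trans (R \<inter> X \<times> X)"
    by (rule trans_Int)
  moreover have "irrefl (R \<inter> X \<times> X)"
    using \<open>irrefl R\<close> unfolding irrefl_def by blast
  moreover have "total_on X (R \<inter> X \<times> X)"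
    using total_on_subset[OF \<open>total_on W R\<close> assms(2)] unfolding total_on_def by blast
  ultimately have "strict_linear_order_on X (R \<inter> X \<times> X)"
    unfolding strict_linear_order_on_def by blast
  then have "linear_embedding X (induced_edges F X) (R \<inter> X \<times> X) p"
    unfolding linear_embedding_def by blast
  with assms(4) have "forest_embedding X (induced_edges F X) (R \<inter> X \<times> X) p"
    unfolding forest_embedding_def pagewise_forest_def by blast
  moreover have "graph_iso V E X (induced_edges F X)"
    using induced_iso_graph_iso[OF assms(3)] .
  ultimately show ?thesis
    using assms(2) unfolding contains_forest_embedding_def by blast
qed

section \<open>Common neighbours on one page\<close>

lemma crossingI:
  assumes "trans R" "(a, b) \<in> R" "(b, c) \<in> R" "(c, d) \<in> R"
  shows "crossing R {a, c} {b, d}"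
proof -
  have "(a, c) \<in> R" "(b, d) \<in> R"
    using transD[OF assms(1)] assms(2-4) by blast+
  with assms(2-4) show ?thesis
    unfolding crossing_def by blast
qed

definition between :: "'a rel \<Rightarrow> 'a \<Rightarrow> 'a \<Rightarrow> 'a \<Rightarrow> bool" where
  "between R a b x \<longleftrightarrow> (a, x) \<in> R \<and> (x, b) \<in> R \<or> (b, x) \<in> R \<and> (x, a) \<in> R"

lemma between_commute: "between R a b x \<longleftrightarrow> between R b a x"
  unfolding between_def by blast

lemma crossing_if_same_side_ordered:
  assumes order: "strict_linear_order_on W R" and "{c1, c2, w, w'} \<subseteq> W" "w \<notin> {c1, c2}" "w' \<notin> {c1, c2}"
    and c12: "(c1, c2) \<in> R" and ww': "(w, w') \<in> R"
    and same_side: "between R c1 c2 w \<longleftrightarrow> between R c1 c2 w'"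
  shows "\<exists>x\<in>{w, w'}. \<exists>y\<in>{c1, c2}. \<exists>x'\<in>{w, w'}. \<exists>y'\<in>{c1, c2}. crossing R {x, y} {x', y'}"
proof -
  have tr: "trans R" and irr: "(x, x) \<notin> R" and total: "total_on W R" for x
    using order unfolding strict_linear_order_on_def irrefl_def by auto
  note tr' = transD[OF tr]
  have no_3cycle: False if "(a, b) \<in> R" "(b, c) \<in> R" "(c, a) \<in> R" for a b c
    using irr tr'[OF tr'[OF that(1,2)] that(3)] by blast
  have outside: "(x, c1) \<in> R \<or> (c2, x) \<in> R" if "x \<in> {w, w'}" "\<not> between R c1 c2 x" for x
  proof -
    have "x \<in> W" "x \<noteq> c1" "x \<noteq> c2" "c1 \<in> W" "c2 \<in> W"
      using assms(2-4) that(1) by auto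
    with total that(2) show ?thesis
      unfolding total_on_def between_def by blast
  qed
  have inside: "(c1, x) \<in> R \<and> (x, c2) \<in> R" if "between R c1 c2 x" for x
    using that no_3cycle[of c2 x c1] c12 unfolding between_def by blast
  consider "(c1, w) \<in> R" "(w', c2) \<in> R" | "(w', c1) \<in> R" | "(w, c1) \<in> R" "(c2, w') \<in> R"
    | "(c2, w) \<in> R"
  proof (cases "between R c1 c2 w")
    case True
    with same_side inside that(1) show ?thesis by blast
  next
    case False
    then have "(w, c1) \<in> R \<or> (c2, w) \<in> R" "(w', c1) \<in> R \<or> (c2, w') \<in> R"
      using outside same_side by auto
    moreover have "\<not> ((c2, w) \<in> R \<and> (w', c1) \<in> R)"
      using no_3cycle[OF tr'[OF ww'] c12] by blast
    ultimately show ?thesis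
      using that(2-4) by blast
  qed
  then show ?thesis
  proof cases
    case 1
    then have "crossing R {c1, w'} {w, c2}"
      using crossingI[OF tr 1(1) ww' 1(2)] by blast
    then show ?thesis
      by (simp add: insert_commute)
  next
    case 2
    then have "crossing R {w, c1} {w', c2}"
      using crossingI[OF tr ww' 2 c12] by blast
    then show ?thesis
      by (simp add: insert_commute)
  next
    case 3
    then have "crossing R {w, c2} {c1, w'}"
      using crossingI[OF tr 3(1) c12 3(2)] by blast
    then show ?thesis
      by (simp add: insert_commute)
  next
    case 4
    then have "crossing R {c1, w} {c2, w'}"
      using crossingI[OF tr c12 4 ww'] by blast
    then show ?thesis
      by (simp add: insert_commute)
  qed
qed

lemma card_page_common_neighbours_le_2:
  assumes book: "book_embedding W F R p" and "c1 \<in> W" "c2 \<in> W" "c1 \<noteq> c2"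
    and A: "\<forall>w\<in>A. w \<in> W - {c1, c2} \<and> {w, c1} \<in> F \<and> {w, c2} \<in> F \<and> p {w, c1} = q \<and> p {w, c2} = q"
  shows "card A \<le> 2"
proof (rule ccontr)
  assume "\<not> card A \<le> 2"
  then obtain B where "B \<subseteq> A" "card B = 3"
    using obtain_subset_with_card_n[of 3 A] by auto
  then obtain w1 w2 w3 where "{w1, w2, w3} \<subseteq> A" "w1 \<noteq> w2" "w2 \<noteq> w3" "w1 \<noteq> w3"
    by (auto simp: card_3_iff)
  then obtain w w' where ww': "w \<in> A" "w' \<in> A" "w \<noteq> w'"
    and same_side: "between R c1 c2 w \<longleftrightarrow> between R c1 c2 w'"
    by (cases "between R c1 c2 w1"; cases "between R c1 c2 w2"; cases "between R c1 c2 w3") auto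
  have order: "strict_linear_order_on W R"
    and no_crossing: "\<forall>e\<in>F. \<forall>f\<in>F. p e = p f \<longrightarrow> \<not> crossing R e f"
    using book unfolding book_embedding_def linear_embedding_def by auto
  have total: "(x, y) \<in> R \<or> (y, x) \<in> R" if "x \<in> W" "y \<in> W" "x \<noteq> y" for x y
    using order that unfolding strict_linear_order_on_def total_on_def by blast
  obtain a a' where a: "(a, a') \<in> R" "{a, a'} = {w, w'}"
  proof -
    have "(w, w') \<in> R \<or> (w', w) \<in> R"
      using total ww' A by blast
    then show ?thesis
      using that[of w w'] that[of w' w] by (auto simp: insert_commute)
  qed
  obtain b b' where b: "(b, b') \<in> R" "{b, b'} = {c1, c2}"
  proof -
    have "(c1, c2) \<in> R \<or> (c2, c1) \<in> R"
      using total assms(2-4) by blast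
    then show ?thesis
      using that[of c1 c2] that[of c2 c1] by (auto simp: insert_commute)
  qed
  have "between R b b' x \<longleftrightarrow> between R c1 c2 x" for x
    using b(2) by (auto simp: doubleton_eq_iff between_commute)
  then have "between R b b' a \<longleftrightarrow> between R b b' a'"
    using a(2) same_side by (auto simp: doubleton_eq_iff)
  moreover have "{b, b', a, a'} \<subseteq> W" "a \<notin> {b, b'}" "a' \<notin> {b, b'}"
    using a(2) b(2) ww' A assms(2,3) by (auto simp: doubleton_eq_iff)
  ultimately have "\<exists>x\<in>{a, a'}. \<exists>y\<in>{b, b'}. \<exists>x'\<in>{a, a'}. \<exists>y'\<in>{b, b'}. crossing R {x, y} {x', y'}"
    using crossing_if_same_side_ordered[OF order _ _ _ b(1) a(1)] by blast
  then have "\<exists>x\<in>{w, w'}. \<exists>y\<in>{c1, c2}. \<exists>x'\<in>{w, w'}. \<exists>y'\<in>{c1, c2}. crossing R {x, y} {x', y'}"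
    by (simp only: a(2) b(2))
  then obtain x y x' y' where "x \<in> {w, w'}" "y \<in> {c1, c2}" "x' \<in> {w, w'}" "y' \<in> {c1, c2}"
    and "crossing R {x, y} {x', y'}"
    by blast
  moreover from this(1-4) have "{x, y} \<in> F" "{x', y'} \<in> F" "p {x, y} = p {x', y'}"
    using ww' A by auto
  ultimately show False
    using no_crossing by blast
qed

lemma card_le_mult_if_fibres_le:
  assumes "finite T" "g ` S \<subseteq> T" "\<And>t. t \<in> T \<Longrightarrow> card {s \<in> S. g s = t} \<le> n"
  shows "card S \<le> n * card T"
proof -
  have "S = (\<Union>t\<in>T. {s \<in> S. g s = t})"
    using assms(2) by blast
  then have "card S \<le> (\<Sum>t\<in>T. card {s \<in> S. g s = t})"
    using card_UN_le[OF assms(1)] by metis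
  also have "\<dots> \<le> (\<Sum>t\<in>T. n)"
    using assms(3) by (rule sum_mono)
  finally show ?thesis
    by (simp add: mult.commute)
qed

lemma rainbow_common_neighbour:
  assumes book: "book_embedding W F R p" and local: "local_embedding l W F p" and "finite F"
    and C: "C \<subseteq> W" "finite C"
    and S: "S \<subseteq> W - C" "\<forall>s\<in>S. \<forall>c\<in>C. {s, c} \<in> F" "2 * card C ^ 3 * l < card S"
  shows "\<exists>s\<in>S. inj_on (\<lambda>c. p {s, c}) C"
proof (rule ccontr)
  assume "\<not> ?thesis"
  then have "\<forall>s\<in>S. \<exists>a b. a \<in> C \<and> b \<in> C \<and> a \<noteq> b \<and> p {s, a} = p {s, b}"
    unfolding inj_on_def by blast
  then obtain a b where ab: "\<And>s. s \<in> S \<Longrightarrow> a s \<in> C \<and> b s \<in> C \<and> a s \<noteq> b s \<and> p {s, a s} = p {s, b s}"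
    by metis
  define P where "P = (\<Union>c\<in>C. pages_at F p c)"
  define g where "g s = (a s, b s, p {s, a s})" for s
  have "finite P"
    unfolding P_def pages_at_def using \<open>finite F\<close> C(2) by auto
  have "card P \<le> (\<Sum>c\<in>C. card (pages_at F p c))"
    unfolding P_def using C(2) by (rule card_UN_le)
  also have "\<dots> \<le> (\<Sum>c\<in>C. l)"
    using local C(1) unfolding local_embedding_def by (intro sum_mono) auto
  finally have card_P: "card P \<le> card C * l"
    by simp
  have "g ` S \<subseteq> C \<times> C \<times> P"
  proof
    fix t assume "t \<in> g ` S"
    then obtain s where "s \<in> S" "t = g s"
      by blast
    with ab[of s] S(2) show "t \<in> C \<times> C \<times> P"
      unfolding g_def P_def pages_at_def by blast
  qed
  moreover have "card {s \<in> S. g s = t} \<le> 2" if "t \<in> C \<times> C \<times> P" for t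
  proof -
    obtain c1 c2 q where t: "t = (c1, c2, q)"
      by (cases t) auto
    show ?thesis
    proof (cases "{s \<in> S. g s = t} = {}")
      case False
      then obtain s where "s \<in> S" "g s = t"
        by blast
      then have "c1 \<noteq> c2"
        using ab t unfolding g_def by auto
      moreover have "\<forall>w\<in>{s \<in> S. g s = t}. w \<in> W - {c1, c2} \<and> {w, c1} \<in> F \<and> {w, c2} \<in> F \<and>
          p {w, c1} = q \<and> p {w, c2} = q"
        using ab S(1,2) t unfolding g_def by fastforce
      ultimately show ?thesis
        using card_page_common_neighbours_le_2[OF book] C(1) that t by blast
    next
      case True
      then show ?thesis
        unfolding True by simp
    qed
  qed
  ultimately have "card S \<le> 2 * card (C \<times> C \<times> P)"
    by (intro card_le_mult_if_fibres_le) (use \<open>finite P\<close> C(2) in auto)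
  also have "\<dots> \<le> 2 * card C ^ 3 * l"
    using card_P by (simp add: card_cartesian_product power3_eq_cube)
  finally show False
    using S(3) by simp
qed

section \<open>The host k-tree\<close>

definition induced_subgraph :: "'a set \<Rightarrow> 'a set set \<Rightarrow> 'a set \<Rightarrow> 'a set set \<Rightarrow> bool" where
  "induced_subgraph W F W' F' \<longleftrightarrow> W \<subseteq> W' \<and> F \<subseteq> F' \<and> (\<forall>x\<in>W. \<forall>y\<in>W. {x, y} \<in> F' \<longrightarrow> {x, y} \<in> F)"

lemma induced_subgraph_refl: "induced_subgraph W F W F"
  unfolding induced_subgraph_def by blast

lemma induced_subgraph_trans:
  "induced_subgraph W F W1 F1 \<Longrightarrow> induced_subgraph W1 F1 W2 F2 \<Longrightarrow> induced_subgraph W F W2 F2"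
  unfolding induced_subgraph_def by blast

lemma clique_induced_subgraph_iff:
  "induced_subgraph W F W' F' \<Longrightarrow> C \<subseteq> W \<Longrightarrow> clique F' C \<longleftrightarrow> clique F C"
  unfolding induced_subgraph_def clique_def by blast

definition children :: "'a set \<Rightarrow> 'a set \<Rightarrow> 'a set set \<Rightarrow> 'a set \<Rightarrow> 'a set \<Rightarrow> bool" where
  "children W W' F' C S \<longleftrightarrow> S \<subseteq> W' - W \<and> (\<forall>s\<in>S. \<forall>x\<in>W. {s, x} \<in> F' \<longleftrightarrow> x \<in> C)"

lemma children_induced_subgraph:
  "children W W1 F1 C S \<Longrightarrow> induced_subgraph W1 F1 W2 F2 \<Longrightarrow> W \<subseteq> W1 \<Longrightarrow> children W W2 F2 C S"
  unfolding children_def induced_subgraph_def by blast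

definition expansion :: "nat \<Rightarrow> nat \<Rightarrow> 'a set \<Rightarrow> 'a set set \<Rightarrow> 'a set \<Rightarrow> 'a set set \<Rightarrow> bool" where
  "expansion k N W F W' F' \<longleftrightarrow> induced_subgraph W F W' F' \<and>
     (\<forall>C. C \<subseteq> W \<and> card C = k \<and> clique F C \<longrightarrow> (\<exists>S. card S = N \<and> children W W' F' C S))"

lemma ktree_add_children:
  assumes "infinite (UNIV :: 'a set)" and ktree: "ktree k W (F :: 'a set set)"
    and C: "C \<subseteq> W" "card C = k" "clique F C"
  shows "\<exists>W' F' S. ktree k W' F' \<and> induced_subgraph W F W' F' \<and> card S = N \<and> children W W' F' C S"
proof (induction N)
  case 0
  show ?case
    using ktree by (intro exI[of _ W] exI[of _ F] exI[of _ "{}"]) (auto simp: induced_subgraph_refl children_def)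
next
  case (Suc N)
  then obtain W' F' S where IH: "ktree k W' F'" "induced_subgraph W F W' F'" "card S = N"
      "children W W' F' C S"
    by blast
  have "W \<subseteq> W'" and S: "S \<subseteq> W' - W" "\<forall>s\<in>S. \<forall>x\<in>W. {s, x} \<in> F' \<longleftrightarrow> x \<in> C"
    using IH(2,4) unfolding induced_subgraph_def children_def by auto
  obtain w where w: "w \<notin> W'"
    using ex_new_if_finite[OF assms(1) ktree_finite[OF IH(1)]] by blast
  define F'' where "F'' = F' \<union> {{w, c} | c. c \<in> C}"
  have "C \<subseteq> W'" "clique F' C"
    using C \<open>W \<subseteq> W'\<close> clique_induced_subgraph_iff[OF IH(2)] by auto
  then have ktree': "ktree k (insert w W') F''"
    using ktree.step[OF IH(1) w _ C(2)] unfolding F''_def clique_def by blast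
  have old_edge: "{w, x} \<notin> F'" for x
    using ktree_edge_subset[OF IH(1)] w by blast
  have new_edge: "{x, y} \<in> {{w, c} | c. c \<in> C} \<longleftrightarrow> x = w \<and> y \<in> C" if "y \<in> W'" for x y
    using that w \<open>C \<subseteq> W'\<close> by (auto simp: doubleton_eq_iff)
  have "induced_subgraph W' F' (insert w W') F''"
    using w new_edge unfolding induced_subgraph_def F''_def by auto
  moreover have "children W (insert w W') F'' C (insert w S)"
    unfolding children_def
  proof (intro conjI ballI)
    show "insert w S \<subseteq> insert w W' - W"
      using S(1) w \<open>W \<subseteq> W'\<close> by blast
  next
    fix s x
    assume s: "s \<in> insert w S" and "x \<in> W"
    then have new: "{s, x} \<in> {{w, c} | c. c \<in> C} \<longleftrightarrow> s = w \<and> x \<in> C"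
      using new_edge[of x s] \<open>W \<subseteq> W'\<close> by (auto simp: insert_commute)
    show "{s, x} \<in> F'' \<longleftrightarrow> x \<in> C"
    proof (cases "s = w")
      case True
      with new old_edge show ?thesis
        unfolding F''_def by auto
    next
      case False
      with s have "s \<in> S"
        by simp
      with False new S(2) \<open>x \<in> W\<close> show ?thesis
        unfolding F''_def by auto
    qed
  qed
  moreover have "card (insert w S) = Suc N"
  proof -
    have "finite S" "w \<notin> S"
      using S(1) w finite_subset[OF _ ktree_finite[OF IH(1)]] by auto
    with IH(3) show ?thesis
      by simp
  qed
  ultimately show ?case
    using ktree' induced_subgraph_trans[OF IH(2)] by blast
qed

lemma ktree_expansion_exists:
  assumes "infinite (UNIV :: 'a set)" and ktree: "ktree k W (F :: 'a set set)"
  shows "\<exists>W' F'. ktree k W' F' \<and> expansion k N W F W' F'"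
proof -
  have extend: "\<exists>W' F'. ktree k W' F' \<and> induced_subgraph W F W' F' \<and>
      (\<forall>C\<in>Q. \<exists>S. card S = N \<and> children W W' F' C S)"
    if "finite Q" "\<forall>C\<in>Q. C \<subseteq> W \<and> card C = k \<and> clique F C" for Q
    using that
  proof (induction Q rule: finite_induct)
    case empty
    then show ?case
      using ktree induced_subgraph_refl by blast
  next
    case (insert C Q)
    then obtain W1 F1 where IH: "ktree k W1 F1" "induced_subgraph W F W1 F1"
        "\<forall>D\<in>Q. \<exists>S. card S = N \<and> children W W1 F1 D S"
      by auto
    have "W \<subseteq> W1"
      using IH(2) unfolding induced_subgraph_def by blast
    have "C \<subseteq> W1" "card C = k" "clique F1 C"
      using insert.prems \<open>W \<subseteq> W1\<close> clique_induced_subgraph_iff[OF IH(2)] by auto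
    then obtain W2 F2 S where step: "ktree k W2 F2" "induced_subgraph W1 F1 W2 F2" "card S = N"
        "children W1 W2 F2 C S"
      using ktree_add_children[OF assms(1) IH(1)] by blast
    have "children W W2 F2 C S"
      using step(4) \<open>W \<subseteq> W1\<close> unfolding children_def by blast
    moreover have "\<forall>D\<in>Q. \<exists>S. card S = N \<and> children W W2 F2 D S"
      using IH(3) children_induced_subgraph[OF _ step(2) \<open>W \<subseteq> W1\<close>] by blast
    ultimately show ?case
      using step(1,3) induced_subgraph_trans[OF IH(2) step(2)] by blast
  qed
  have "finite {C. C \<subseteq> W \<and> card C = k \<and> clique F C}"
    using ktree_finite[OF ktree] by simp
  then obtain W' F' where "ktree k W' F'" "induced_subgraph W F W' F'"
    "\<forall>C\<in>{C. C \<subseteq> W \<and> card C = k \<and> clique F C}. \<exists>S. card S = N \<and> children W W' F' C S"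
    using extend[of "{C. C \<subseteq> W \<and> card C = k \<and> clique F C}"] by blast
  then show ?thesis
    unfolding expansion_def by blast
qed

primrec tower :: "nat \<Rightarrow> nat \<Rightarrow> nat \<Rightarrow> nat set \<times> nat set set" where
  "tower k N 0 = ({..k}, {e. \<exists>u v. e = {u, v} \<and> u \<noteq> v \<and> u \<in> {..k} \<and> v \<in> {..k}})"
| "tower k N (Suc m) = (SOME G. ktree k (fst G) (snd G) \<and>
     expansion k N (fst (tower k N m)) (snd (tower k N m)) (fst G) (snd G))"

lemma tower_step:
  assumes "ktree k (fst (tower k N m)) (snd (tower k N m))"
  shows "ktree k (fst (tower k N (Suc m))) (snd (tower k N (Suc m))) \<and>
    expansion k N (fst (tower k N m)) (snd (tower k N m)) (fst (tower k N (Suc m))) (snd (tower k N (Suc m)))"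
proof -
  have "\<exists>G. ktree k (fst G) (snd G) \<and> expansion k N (fst (tower k N m)) (snd (tower k N m)) (fst G) (snd G)"
    using ktree_expansion_exists[OF infinite_UNIV_nat assms] by auto
  then show ?thesis
    unfolding tower.simps(2) by (rule someI_ex)
qed

declare tower.simps(2) [simp del]

lemma tower_ktree: "ktree k (fst (tower k N m)) (snd (tower k N m))"
proof (induction m)
  case 0
  show ?case
    using ktree.base[of "{..k}" k] by simp
next
  case (Suc m)
  then show ?case
    using tower_step by blast
qed

lemma tower_expansion:
  "expansion k N (fst (tower k N m)) (snd (tower k N m)) (fst (tower k N (Suc m))) (snd (tower k N (Suc m)))"
  using tower_step[OF tower_ktree] by blast

section \<open>A forest copy in every local book embedding of the host\<close>

locale tower_book_embedding =
  fixes k l N d :: nat and R :: "nat rel" and p :: "nat set \<Rightarrow> nat"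
  assumes width: "2 * k ^ 3 * l < N"
    and book: "book_embedding (fst (tower k N d)) (snd (tower k N d)) R p"
    and local: "local_embedding l (fst (tower k N d)) (snd (tower k N d)) p"
begin

abbreviation level :: "nat \<Rightarrow> nat set" where
  "level m \<equiv> fst (tower k N m)"

abbreviation edges :: "nat \<Rightarrow> nat set set" where
  "edges m \<equiv> snd (tower k N m)"

lemma level_induced_subgraph:
  assumes "m \<le> n"
  shows "induced_subgraph (level m) (edges m) (level n) (edges n)"
  using assms
proof (induction n rule: dec_induct)
  case base
  show ?case
    by (rule induced_subgraph_refl)
next
  case (step n)
  have "induced_subgraph (level n) (edges n) (level (Suc n)) (edges (Suc n))"
    using tower_expansion[of k N n] unfolding expansion_def by blast
  with step.IH show ?case
    by (rule induced_subgraph_trans)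
qed

lemma level_mono: "m \<le> n \<Longrightarrow> level m \<subseteq> level n"
  using level_induced_subgraph unfolding induced_subgraph_def by blast

lemma finite_level: "finite (level m)"
  using ktree_finite[OF tower_ktree] .

lemma rainbow_child:
  assumes "m < d" "C \<subseteq> level m" "card C = k" "clique (edges d) C"
  shows "\<exists>w \<in> level (Suc m) - level m. (\<forall>x\<in>level m. {w, x} \<in> edges d \<longleftrightarrow> x \<in> C) \<and>
    inj_on (\<lambda>c. p {w, c}) C"
proof -
  have sub_m: "induced_subgraph (level m) (edges m) (level d) (edges d)"
    and sub_Suc: "induced_subgraph (level (Suc m)) (edges (Suc m)) (level d) (edges d)"
    using assms(1) level_induced_subgraph by auto
  have "clique (edges m) C"
    using clique_induced_subgraph_iff[OF sub_m assms(2)] assms(4) by blast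
  then obtain S where S: "card S = N" "children (level m) (level (Suc m)) (edges (Suc m)) C S"
    using tower_expansion[of k N m] assms(2,3) unfolding expansion_def by blast
  have "level m \<subseteq> level (Suc m)" "level (Suc m) \<subseteq> level d"
    using assms(1) level_mono by auto
  then have nbrs: "\<forall>s\<in>S. \<forall>x\<in>level m. {s, x} \<in> edges d \<longleftrightarrow> x \<in> C"
    using children_induced_subgraph[OF S(2) sub_Suc] unfolding children_def by blast
  have S_new: "S \<subseteq> level (Suc m) - level m"
    using S(2) unfolding children_def by blast
  have "\<exists>s\<in>S. inj_on (\<lambda>c. p {s, c}) C"
  proof (rule rainbow_common_neighbour[OF book local])
    show "finite (edges d)"
      by (rule ktree_finite_edges[OF tower_ktree])
    show "C \<subseteq> level d" "finite C"
      using assms(2) \<open>level m \<subseteq> level (Suc m)\<close> \<open>level (Suc m) \<subseteq> level d\<close>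
        finite_subset[OF assms(2) finite_level] by auto
    show "S \<subseteq> level d - C"
      using S_new assms(2) \<open>level (Suc m) \<subseteq> level d\<close> by blast
    show "\<forall>s\<in>S. \<forall>c\<in>C. {s, c} \<in> edges d"
      using nbrs assms(2) by blast
    show "2 * card C ^ 3 * l < card S"
      using width S(1) assms(3) by simp
  qed
  with nbrs S_new show ?thesis
    by blast
qed

lemma rainbow_forest_clique_chain:
  assumes "j \<le> k" "k < d"
  shows "\<exists>Y C. Y \<subseteq> C \<and> card Y = j \<and> C \<subseteq> level j \<and> card C = k \<and> clique (edges d) C \<and>
    pagewise_forest (edges d) p Y"
  using assms(1)
proof (induction j)
  case 0
  have "{u, v} \<in> edges 0" if "u \<in> {..<k}" "v \<in> {..<k}" "u \<noteq> v" for u v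
    unfolding tower.simps(1) snd_conv by (rule complete_edges_memI) (use that in auto)
  then have "clique (edges 0) {..<k}"
    unfolding clique_def by blast
  moreover have "{..<k} \<subseteq> level 0"
    by (auto simp: tower.simps(1))
  ultimately have "clique (edges d) {..<k}"
    using clique_induced_subgraph_iff[OF level_induced_subgraph[of 0 d]] by blast
  with \<open>{..<k} \<subseteq> level 0\<close> have "{} \<subseteq> {..<k} \<and> card {} = 0 \<and> {..<k} \<subseteq> level 0 \<and> card {..<k} = k \<and>
      clique (edges d) {..<k} \<and> pagewise_forest (edges d) p {}"
    using pagewise_forest_empty by simp
  then show ?case
    by blast
next
  case (Suc j)
  then obtain Y C where IH: "Y \<subseteq> C" "card Y = j" "C \<subseteq> level j" "card C = k"
      "clique (edges d) C" "pagewise_forest (edges d) p Y"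
    by auto
  have "j < d"
    using Suc.prems assms(2) by simp
  then obtain w where w: "w \<in> level (Suc j)" "w \<notin> level j"
      "\<forall>x\<in>level j. {w, x} \<in> edges d \<longleftrightarrow> x \<in> C" "inj_on (\<lambda>c. p {w, c}) C"
    using rainbow_child[OF _ IH(3-5)] by blast
  have "finite C"
    using finite_subset[OF IH(3) finite_level] .
  then have "finite Y"
    using IH(1) finite_subset by blast
  have "\<not> C \<subseteq> Y"
  proof
    assume "C \<subseteq> Y"
    then have "card C \<le> card Y"
      using card_mono[OF \<open>finite Y\<close>] by blast
    with IH(2,4) Suc.prems show False
      by simp
  qed
  then obtain c where c: "c \<in> C" "c \<notin> Y"
    by blast
  have "w \<notin> C"
    using IH(3) w(2) by blast
  have "insert w Y \<subseteq> insert w (C - {c})"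
    using IH(1) c by blast
  moreover have "card (insert w Y) = Suc j"
  proof -
    have "w \<notin> Y"
      using IH(1) \<open>w \<notin> C\<close> by blast
    with IH(2) \<open>finite Y\<close> show ?thesis
      by simp
  qed
  moreover have "insert w (C - {c}) \<subseteq> level (Suc j)"
    using IH(3) w(1) level_mono[of j "Suc j"] by auto
  moreover have "card (insert w (C - {c})) = k"
    using IH(4) c(1) \<open>w \<notin> C\<close> \<open>finite C\<close> card_gt_0_iff[of C] by auto
  moreover have "clique (edges d) (insert w (C - {c}))"
  proof (rule clique_insert)
    show "clique (edges d) (C - {c})"
      using clique_subset[OF IH(5)] by blast
    show "\<forall>x\<in>C - {c}. {w, x} \<in> edges d"
      using w(3) IH(3) by blast
  qed
  moreover have "pagewise_forest (edges d) p (insert w Y)"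
    by (rule pagewise_forest_insert_child[OF IH(6) _ w(2-4)]) (use IH(1,3) in blast)
  ultimately show ?case
    by blast
qed

lemma rainbow_forest_clique:
  assumes "k < d"
  shows "\<exists>X. X \<subseteq> level (Suc k) \<and> card X = Suc k \<and> clique (edges d) X \<and> pagewise_forest (edges d) p X"
proof -
  obtain Y C where YC: "Y \<subseteq> C" "card Y = k" "C \<subseteq> level k" "card C = k" "clique (edges d) C"
    "pagewise_forest (edges d) p Y"
    using rainbow_forest_clique_chain[OF order_refl assms] by blast
  have "finite C"
    using finite_subset[OF YC(3) finite_level] .
  then have "Y = C"
    using card_subset_eq YC(1,2,4) by metis
  obtain w where w: "w \<in> level (Suc k)" "w \<notin> level k"
      "\<forall>x\<in>level k. {w, x} \<in> edges d \<longleftrightarrow> x \<in> C" "inj_on (\<lambda>c. p {w, c}) C"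
    using rainbow_child[OF assms YC(3-5)] by blast
  have "w \<notin> C"
    using YC(3) w(2) by blast
  have "insert w C \<subseteq> level (Suc k)"
    using YC(3) w(1) level_mono[of k "Suc k"] by auto
  moreover have "card (insert w C) = Suc k"
    using YC(4) \<open>w \<notin> C\<close> \<open>finite C\<close> by simp
  moreover have "clique (edges d) (insert w C)"
  proof (rule clique_insert[OF YC(5)])
    show "\<forall>x\<in>C. {w, x} \<in> edges d"
      using w(3) YC(3) by blast
  qed
  moreover have "pagewise_forest (edges d) p (insert w C)"
    by (rule pagewise_forest_insert_child[OF _ YC(3) w(2-4)]) (use YC(6) \<open>Y = C\<close> in simp)
  ultimately show ?thesis
    by blast
qed

lemma forest_copy_of_ktree:
  assumes "ktree k V E" "card V \<le> d"
  shows "\<exists>f X. X \<subseteq> level (card V) \<and> induced_iso f V E X (edges d) \<and> pagewise_forest (edges d) p X"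
  using assms
proof (induction rule: ktree.induct)
  case (base V)
  then have "k < d"
    by simp
  then obtain X where X: "X \<subseteq> level (Suc k)" "card X = Suc k" "clique (edges d) X"
    "pagewise_forest (edges d) p X"
    using rainbow_forest_clique by blast
  have "finite X"
    using X(2) card.infinite by fastforce
  have "\<exists>f. induced_iso f V {e. \<exists>u v. e = {u, v} \<and> u \<noteq> v \<and> u \<in> V \<and> v \<in> V} X (edges d)"
    by (rule induced_iso_complete[OF base(1) \<open>finite X\<close> _ X(3) ktree_no_loop[OF tower_ktree]])
      (use X(2) base(2) in simp)
  moreover have "X \<subseteq> level (card V)"
    using X(1) base(2) by simp
  ultimately show ?case
    using X(4) by blast
next
  case (step V E w C)
  have card_insert: "card (insert w V) = Suc (card V)"
    using ktree_finite[OF step.hyps(1)] step.hyps(2) by simp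
  with step.prems obtain f X where IH: "X \<subseteq> level (card V)" "induced_iso f V E X (edges d)"
      "pagewise_forest (edges d) p X"
    using step.IH by auto
  have inj: "inj_on f V" and fV: "f ` V = X"
    using IH(2) unfolding induced_iso_def bij_betw_def by auto
  have "card V < d"
    using card_insert step.prems by simp
  moreover have "f ` C \<subseteq> level (card V)"
    using fV step.hyps(3) IH(1) by blast
  moreover have "card (f ` C) = k"
    using card_image[OF inj_on_subset[OF inj step.hyps(3)]] step.hyps(4) by simp
  moreover have "clique (edges d) (f ` C)"
    using induced_iso_clique[OF IH(2) step.hyps(3)] step.hyps(5) unfolding clique_def by blast
  ultimately obtain w' where w': "w' \<in> level (Suc (card V))" "w' \<notin> level (card V)"
      "\<forall>x\<in>level (card V). {w', x} \<in> edges d \<longleftrightarrow> x \<in> f ` C" "inj_on (\<lambda>c. p {w', c}) (f ` C)"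
    using rainbow_child by blast
  have "w' \<notin> X"
    using IH(1) w'(2) by blast
  have "insert w' X \<subseteq> level (card (insert w V))"
    using IH(1) w'(1) level_mono[of "card V" "Suc (card V)"] card_insert by auto
  moreover have "induced_iso (f(w := w')) (insert w V) (E \<union> {{w, c} |c. c \<in> C}) (insert w' X) (edges d)"
  proof (rule induced_iso_insert[OF IH(2) _ step.hyps(2) \<open>w' \<notin> X\<close> step.hyps(3) ktree_no_loop[OF tower_ktree]])
    show "\<forall>e\<in>E. e \<subseteq> V"
      using ktree_edge_subset[OF step.hyps(1)] by blast
    show "\<forall>x\<in>X. {w', x} \<in> edges d \<longleftrightarrow> x \<in> f ` C"
      using w'(3) IH(1) by blast
  qed
  moreover have "pagewise_forest (edges d) p (insert w' X)"
    by (rule pagewise_forest_insert_child[OF IH(3,1) w'(2-4)])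
  ultimately show ?case
    by blast
qed

end

theorem lemma2:
  fixes k l :: nat and V :: "'a set" and E :: "'a set set"
  assumes "k \<ge> 1" and "ktree k V E"
  shows "\<exists>(W :: nat set) (F :: nat set set). ktree k W F \<and>
           (\<forall>R p. book_embedding W F R p \<and> local_embedding l W F p \<longrightarrow>
                  contains_forest_embedding W F R p V E)"
proof -
  define N where "N = 2 * k ^ 3 * l + 1"
  define d where "d = card V"
  have "contains_forest_embedding (fst (tower k N d)) (snd (tower k N d)) R p V E"
    if "book_embedding (fst (tower k N d)) (snd (tower k N d)) R p"
      "local_embedding l (fst (tower k N d)) (snd (tower k N d)) p" for R p
  proof -
    interpret tower_book_embedding k l N d R p
      using that N_def by unfold_locales auto
    obtain f X where "X \<subseteq> level d" "induced_iso f V E X (edges d)" "pagewise_forest (edges d) p X"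
      using forest_copy_of_ktree[OF assms(2)] d_def by auto
    then show ?thesis
      by (intro contains_forest_embeddingI[OF book])
  qed
  then show ?thesis
    using tower_ktree by blast
qed

end
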